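(* Let $K$ be a complex with the maximum number of facets among all complexes in $\mathcal{K}(n,r,\beta)$. Then $K$ contains every $r$-element subset of $V(K)$ as an $(r-1)$-face, and $K$ is $(r-1)$-path connected.
   Context: A (finite abstract) simplicial complex $K$ on a finite vertex set $V(K)$ is a family of subsets of $V(K)$ closed under taking subsets and containing every singleton; it is on $n$ vertices if $|V(K)|=n$. An $i$-face is a member of cardinality $i+1$; facets are inclusion-maximal faces; $K$ is pure if all facets have the same dimension. Two distinct $i$-faces are up-neighbors if their union is an $(i+1)$-face. $K$ is $i$-path connected if for any two $i$-faces $F,G$ there is a sequence $F=F_1,\dots,F_m=G$ of $i$-faces in which consecutive terms are up-neighbors. $\beta_r(K)=\dim_{\mathbb R}H_r(K;\mathbb R)$. $\mathcal{K}(n,r,\beta)$ denotes the set of pure $r$-dimensional simplicial complexes on $n$ vertices with $\beta_r=\beta$ ($r\ge 1$). *)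

theory Defs
  imports Complex_Main "HOL-Library.Function_Algebras"
begin

text \<open>Vertices are linearly ordered, which
  fixes the orientation used for simplicial chains.\<close>

definition simplicial_complex :: "'a set set \<Rightarrow> bool" where
  "simplicial_complex K \<longleftrightarrow> K \<noteq> {} \<and> finite (\<Union>K) \<and> (\<forall>F\<in>K. \<forall>G. G \<subseteq> F \<longrightarrow> G \<in> K)"

definition vertices :: "'a set set \<Rightarrow> 'a set" where
  "vertices K = \<Union>K"

definition faces :: "'a set set \<Rightarrow> nat \<Rightarrow> 'a set set" where
  "faces K i = {F \<in> K. card F = i + 1}"

definition facets :: "'a set set \<Rightarrow> 'a set set" where
  "facets K = {F \<in> K. \<forall>G\<in>K. F \<subseteq> G \<longrightarrow> G = F}"

definition pure_dim :: "'a set set \<Rightarrow> nat \<Rightarrow> bool" where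
  "pure_dim K r \<longleftrightarrow> (\<forall>F\<in>facets K. card F = r + 1)"

text \<open>Real simplicial chains: i-chains are real-valued functions supported on i-faces
  (each i-face identified with its increasingly ordered oriented simplex).\<close>
definition chains :: "'a set set \<Rightarrow> nat \<Rightarrow> ('a set \<Rightarrow> real) set" where
  "chains K i = {c. \<forall>x. c x \<noteq> 0 \<longrightarrow> x \<in> faces K i}"

definition boundary :: "'a::linorder set set \<Rightarrow> nat \<Rightarrow> ('a set \<Rightarrow> real) \<Rightarrow> ('a set \<Rightarrow> real)" where
  "boundary K i c = (\<lambda>\<sigma>. if 0 < i \<and> \<sigma> \<in> faces K (i - 1) then
      (\<Sum>v\<in>vertices K - \<sigma>. if insert v \<sigma> \<in> K
          then (-1) ^ card {u\<in>\<sigma>. u < v} * c (insert v \<sigma>) else 0)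
     else 0)"

definition rdim :: "('a set \<Rightarrow> real) set \<Rightarrow> nat" where
  "rdim S = vector_space.dim (\<lambda>(a::real) f x. a * f x) S"

definition cycles :: "'a::linorder set set \<Rightarrow> nat \<Rightarrow> ('a set \<Rightarrow> real) set" where
  "cycles K i = {c \<in> chains K i. boundary K i c = 0}"

definition bdries :: "'a::linorder set set \<Rightarrow> nat \<Rightarrow> ('a set \<Rightarrow> real) set" where
  "bdries K i = boundary K (Suc i) ` chains K (Suc i)"

definition betti :: "'a::linorder set set \<Rightarrow> nat \<Rightarrow> nat" where
  "betti K r = rdim (cycles K r) - rdim (bdries K r)"

definition cplx_class :: "nat \<Rightarrow> nat \<Rightarrow> nat \<Rightarrow> 'a::linorder set set set" where
  "cplx_class n r \<beta> = {K. simplicial_complex K \<and> card (vertices K) = n \<and>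
      (\<exists>F\<in>K. card F = r + 1) \<and> pure_dim K r \<and> betti K r = \<beta>}"

definition up_neighbors :: "'a set set \<Rightarrow> nat \<Rightarrow> 'a set \<Rightarrow> 'a set \<Rightarrow> bool" where
  "up_neighbors K i F G \<longleftrightarrow> F \<in> faces K i \<and> G \<in> faces K i \<and> F \<noteq> G \<and>
      F \<union> G \<in> faces K (Suc i)"

definition path_connected_dim :: "'a set set \<Rightarrow> nat \<Rightarrow> bool" where
  "path_connected_dim K i \<longleftrightarrow> (\<forall>F\<in>faces K i. \<forall>G\<in>faces K i.
      \<exists>xs. xs \<noteq> [] \<and> hd xs = F \<and> last xs = G \<and> set xs \<subseteq> faces K i \<and>
        (\<forall>j. Suc j < length xs \<longrightarrow> up_neighbors K i (xs ! j) (xs ! Suc j)))"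

end

theory Submission
  imports Defs
begin

text \<open>Let \<open>m\<close> be the least vertex and \<open>n\<close> the number of vertices. The boundaries of the
  \<open>r\<close>-simplices through \<open>m\<close> are linearly independent and span the boundary of every \<open>r\<close>-chain
  on the vertex set, and an \<open>r\<close>-cycle is determined by its values on the \<open>r\<close>-faces avoiding \<open>m\<close>.
  By rank-nullity a complex in \<open>K(n, r, \<beta>)\<close> has at most \<open>\<beta> + C(n - 1, r)\<close> facets, and the
  complex generated by all \<open>r\<close>-simplices through \<open>m\<close> and \<open>\<beta>\<close> further \<open>r\<close>-simplices avoiding
  \<open>m\<close> attains this bound. Hence in a complex with the most facets the boundary \<open>\<partial>\<rho>\<close> of each
  \<open>r\<close>-simplex \<open>\<rho>\<close> through \<open>m\<close> is the boundary of an \<open>r\<close>-chain. Since \<open>\<partial>\<rho>\<close> is nonzero on every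
  \<open>r\<close>-subset of \<open>\<rho>\<close>, every \<open>r\<close>-set is a face. Restricting such a chain to the \<open>r\<close>-faces over one
  up-component restricts its boundary to that component; comparing with \<open>\<partial>\<rho>\<close> on the faces
  avoiding \<open>m\<close> shows that a component containing one facet of \<open>\<rho>\<close> contains all of them, so
  vertices of an \<open>(r - 1)\<close>-face can be exchanged one at a time within a component.\<close>

section \<open>Linear algebra in spaces of real functions\<close>

lemma real_fun_vector_space: "vector_space (\<lambda>(a::real) (f::'b \<Rightarrow> real) x. a * f x)"
  by unfold_locales (auto simp: fun_eq_iff algebra_simps)

interpretation real_fun: vector_space "\<lambda>(a::real) (f::'b \<Rightarrow> real) x. a * f x"
  by (rule real_fun_vector_space)

abbreviation real_fun_linear :: "(('b \<Rightarrow> real) \<Rightarrow> 'c \<Rightarrow> real) \<Rightarrow> bool" where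
  "real_fun_linear \<equiv> Vector_Spaces.linear (\<lambda>(a::real) (g::'b \<Rightarrow> real) x. a * g x)
     (\<lambda>(a::real) (g::'c \<Rightarrow> real) x. a * g x)"

lemma sum_apply: "(\<Sum>y\<in>A. f y) x = (\<Sum>y\<in>A. f y x)"
  by (induction A rule: infinite_finite_induct) auto

lemma dim_le_dim_kernel_plus_dim_image:
  fixes f :: "('b \<Rightarrow> real) \<Rightarrow> 'c \<Rightarrow> real"
  assumes lin: "real_fun_linear f" and S: "real_fun.subspace S"
    and F: "finite F" "S \<subseteq> real_fun.span F"
  shows "real_fun.dim S \<le> real_fun.dim (S \<inter> {x. f x = 0}) + real_fun.dim (f ` S)"
proof -
  interpret f: Vector_Spaces.linear "\<lambda>(a::real) (g::'b \<Rightarrow> real) x. a * g x"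
      "\<lambda>(a::real) (g::'c \<Rightarrow> real) x. a * g x" f
    by (fact lin)
  obtain Bz where Bz: "Bz \<subseteq> S \<inter> {x. f x = 0}" "real_fun.independent Bz"
      "S \<inter> {x. f x = 0} \<subseteq> real_fun.span Bz" "card Bz = real_fun.dim (S \<inter> {x. f x = 0})"
    by (rule real_fun.basis_exists)
  obtain Bw where Bw: "Bw \<subseteq> f ` S" "real_fun.independent Bw" "f ` S \<subseteq> real_fun.span Bw"
      "card Bw = real_fun.dim (f ` S)"
    by (rule real_fun.basis_exists)
  have "finite Bz" using real_fun.independent_span_bound[OF F(1) Bz(2)] Bz(1) F(2) by blast
  have "Bw \<subseteq> real_fun.span (f ` F)" using Bw(1) F(2) f.span_image by blast
  then have "finite Bw" using real_fun.independent_span_bound[OF _ Bw(2)] F(1) by blast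
  obtain g where g: "\<And>w. w \<in> Bw \<Longrightarrow> g w \<in> S \<and> f (g w) = w"
    using bchoice[of Bw "\<lambda>w x. x \<in> S \<and> f x = w"] Bw(1) by blast
  have "f ` g ` Bw = Bw"
    unfolding image_image using g by (simp cong: image_cong)
  have g_S: "real_fun.span (g ` Bw) \<subseteq> S" using g S by (intro real_fun.span_minimal) auto
  have "S \<subseteq> real_fun.span (Bz \<union> g ` Bw)"
  proof
    fix x assume x: "x \<in> S"
    then have "f x \<in> f ` real_fun.span (g ` Bw)"
      using Bw(3) f.span_image[of "g ` Bw"] \<open>f ` g ` Bw = Bw\<close> by auto
    then obtain y where "f x = f y" and y: "y \<in> real_fun.span (g ` Bw)" by blast
    then have "x - y \<in> S \<inter> {x. f x = 0}"
      using real_fun.subspace_diff[OF S x] g_S f.diff by auto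
    then have "x - y \<in> real_fun.span (Bz \<union> g ` Bw)"
      using Bz(3) real_fun.span_mono[of Bz "Bz \<union> g ` Bw"] by blast
    moreover have "y \<in> real_fun.span (Bz \<union> g ` Bw)"
      using y real_fun.span_mono[of "g ` Bw" "Bz \<union> g ` Bw"] by blast
    ultimately have "(x - y) + y \<in> real_fun.span (Bz \<union> g ` Bw)" by (rule real_fun.span_add)
    then show "x \<in> real_fun.span (Bz \<union> g ` Bw)" by simp
  qed
  then have "real_fun.dim S \<le> card (Bz \<union> g ` Bw)"
    using \<open>finite Bz\<close> \<open>finite Bw\<close> by (intro real_fun.dim_le_card) simp_all
  also have "\<dots> \<le> card Bz + card Bw"
    using card_Un_le card_image_le[OF \<open>finite Bw\<close>, of g] by (meson add_left_mono order_trans)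
  finally show ?thesis using Bz(4) Bw(4) by simp
qed

lemma span_subset_subspace_if_card_le_dim:
  assumes W: "real_fun.subspace W" and W_A: "W \<subseteq> real_fun.span A" and A: "finite A"
    and card_A: "card A \<le> real_fun.dim W"
  shows "A \<subseteq> W"
proof
  fix a assume a: "a \<in> A"
  obtain B where B: "B \<subseteq> W" "real_fun.independent B" "W \<subseteq> real_fun.span B"
      "card B = real_fun.dim W"
    by (rule real_fun.basis_exists)
  have B_A: "B \<subseteq> real_fun.span A" using B(1) W_A by blast
  have "a \<in> real_fun.span B"
  proof (rule ccontr)
    assume a_B: "a \<notin> real_fun.span B"
    have "insert a B \<subseteq> real_fun.span A" using a B_A real_fun.span_base by blast
    then have "card (insert a B) \<le> card A"
      using real_fun.independent_span_bound[OF A real_fun.independent_insertI[OF a_B B(2)]] by blast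
    moreover have "finite B" using real_fun.independent_span_bound[OF A B(2) B_A] by blast
    moreover have "a \<notin> B" using a_B real_fun.span_base by blast
    ultimately show False using card_A B(4) by simp
  qed
  then show "a \<in> W" using real_fun.span_minimal[OF B(1) W] by blast
qed

lemma dim_le_card_if_inj_on:
  fixes R :: "('b \<Rightarrow> real) \<Rightarrow> 'c \<Rightarrow> real"
  assumes lin: "real_fun_linear R" and W: "real_fun.subspace W" and inj: "inj_on R W"
    and A: "finite A" and R_W: "R ` W \<subseteq> real_fun.span A"
  shows "real_fun.dim W \<le> card A"
proof -
  interpret R: Vector_Spaces.linear "\<lambda>(a::real) (g::'b \<Rightarrow> real) x. a * g x"
      "\<lambda>(a::real) (g::'c \<Rightarrow> real) x. a * g x" R
    by (fact lin)
  obtain B where B: "B \<subseteq> W" "real_fun.independent B" "W \<subseteq> real_fun.span B"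
      "card B = real_fun.dim W"
    by (rule real_fun.basis_exists)
  have "real_fun.span B = W" using B(1,3) real_fun.span_minimal[OF B(1) W] by blast
  then have "real_fun.independent (R ` B)" using R.independent_injective_image[OF B(2)] inj by simp
  then have "card (R ` B) \<le> card A" using real_fun.independent_span_bound[OF A] R_W B(1) by blast
  moreover have "card (R ` B) = card B" by (rule card_image[OF inj_on_subset[OF inj B(1)]])
  ultimately show ?thesis using B(4) by simp
qed

definition unit_chain :: "'b \<Rightarrow> 'b \<Rightarrow> real" where
  "unit_chain s = (\<lambda>x. if x = s then 1 else 0)"

lemma eq_sum_unit_chains:
  assumes "finite A" and "\<And>x. f x \<noteq> 0 \<Longrightarrow> x \<in> A"
  shows "f = (\<Sum>a\<in>A. (\<lambda>x. f a * unit_chain a x))"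
proof
  fix x
  have "(\<Sum>a\<in>A. (\<lambda>x. f a * unit_chain a x)) x = (\<Sum>a\<in>A. if a = x then f x else 0)"
    unfolding sum_apply unit_chain_def by (intro sum.cong) auto
  also have "\<dots> = f x" using assms by (cases "x \<in> A") auto
  finally show "f x = (\<Sum>a\<in>A. (\<lambda>x. f a * unit_chain a x)) x" by simp
qed

lemma in_span_unit_chains:
  assumes "finite A" and "\<And>x. f x \<noteq> 0 \<Longrightarrow> x \<in> A"
  shows "f \<in> real_fun.span (unit_chain ` A)"
  by (subst eq_sum_unit_chains[OF assms], blast)
    (intro real_fun.span_sum real_fun.span_scale[of "unit_chain _", simplified]
      real_fun.span_base imageI)

context
  fixes X :: "'x set" and h :: "'x \<Rightarrow> 'y \<Rightarrow> real" and p :: "'x \<Rightarrow> 'y"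
  assumes finite_X: "finite X"
    and biorthogonal: "\<And>x y. x \<in> X \<Longrightarrow> y \<in> X \<Longrightarrow> h x (p y) = (if x = y then 1 else 0)"
begin

lemma biorthogonal_inj_on: "inj_on h X"
proof (rule inj_onI)
  fix x x' assume "x \<in> X" "x' \<in> X" "h x = h x'"
  then show "x = x'" using biorthogonal[of x x'] biorthogonal[of x' x'] by (auto split: if_splits)
qed

lemma biorthogonal_card_image: "card (h ` X) = card X"
  by (rule card_image[OF biorthogonal_inj_on])

lemma biorthogonal_coefficient:
  assumes "y \<in> X"
  shows "(\<Sum>g\<in>h ` X. (\<lambda>z. c g * g z)) (p y) = c (h y)"
proof -
  have "(\<Sum>g\<in>h ` X. (\<lambda>z. c g * g z)) (p y) = (\<Sum>x\<in>X. c (h x) * h x (p y))"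
    by (simp add: sum_apply sum.reindex[OF biorthogonal_inj_on])
  also have "\<dots> = (\<Sum>x\<in>X. if x = y then c (h y) else 0)"
    by (intro sum.cong) (simp_all add: biorthogonal assms)
  also have "\<dots> = c (h y)" using finite_X assms by simp
  finally show ?thesis .
qed

lemma biorthogonal_independent: "real_fun.independent (h ` X)"
proof (rule real_fun.independent_if_scalars_zero)
  fix c g assume sum_0: "(\<Sum>g\<in>h ` X. (\<lambda>z. c g * g z)) = 0" and "g \<in> h ` X"
  then obtain y where "y \<in> X" "g = h y" by blast
  then show "c g = 0" using biorthogonal_coefficient[of y c] sum_0 by simp
qed (use finite_X in simp)

lemma biorthogonal_span_eq_0:
  assumes u: "u \<in> real_fun.span (h ` X)" and u_p: "\<And>y. y \<in> X \<Longrightarrow> u (p y) = 0"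
  shows "u = 0"
proof -
  obtain c where c: "u = (\<Sum>g\<in>h ` X. (\<lambda>z. c g * g z))"
    using u real_fun.span_finite[of "h ` X"] finite_X by auto
  have "c g = 0" if g: "g \<in> h ` X" for g
  proof -
    obtain y where "y \<in> X" "g = h y" using g by blast
    then show ?thesis using biorthogonal_coefficient[of y c] u_p unfolding c by simp
  qed
  then show ?thesis unfolding c by (intro sum.neutral ballI) (simp add: fun_eq_iff)
qed

end

lemma unit_chain_apply: "unit_chain x y = (if x = y then 1 else 0)"
  unfolding unit_chain_def by auto

section \<open>Oriented simplices and their boundaries\<close>

definition incidence :: "'a::linorder set \<Rightarrow> 'a \<Rightarrow> real" where
  "incidence \<rho> v = (-1) ^ card {u\<in>\<rho>. u < v}"

definition simplex_boundary :: "'a::linorder set \<Rightarrow> 'a set \<Rightarrow> real" where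
  "simplex_boundary \<rho> = (\<lambda>\<sigma>. \<Sum>v\<in>\<rho>. if \<sigma> = \<rho> - {v} then incidence \<rho> v else 0)"

lemma incidence_nonzero: "incidence \<rho> v \<noteq> 0"
  unfolding incidence_def by simp

lemma incidence_least: "(\<And>u. u \<in> \<rho> \<Longrightarrow> v \<le> u) \<Longrightarrow> incidence \<rho> v = 1"
proof -
  assume "\<And>u. u \<in> \<rho> \<Longrightarrow> v \<le> u"
  then have "{u\<in>\<rho>. u < v} = {}" by fastforce
  then show ?thesis unfolding incidence_def by (simp only: card.empty power_0)
qed

lemma incidence_remove_less:
  assumes "finite \<tau>" "v \<in> \<tau>" "v < w"
  shows "incidence (\<tau> - {v}) w = - incidence \<tau> w"
proof -
  have "{u \<in> \<tau>. u < w} = insert v {u \<in> \<tau> - {v}. u < w}" using assms by auto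
  then have "card {u \<in> \<tau>. u < w} = Suc (card {u \<in> \<tau> - {v}. u < w})" using assms(1) by simp
  then show ?thesis unfolding incidence_def by simp
qed

lemma incidence_remove_greater:
  assumes "w < v"
  shows "incidence (\<tau> - {v}) w = incidence \<tau> w"
proof -
  have "{u \<in> \<tau> - {v}. u < w} = {u \<in> \<tau>. u < w}" using assms by auto
  then show ?thesis unfolding incidence_def by simp
qed

lemma incidence_insert_less:
  assumes "finite \<tau>" "v \<notin> \<tau>" "v < w"
  shows "incidence (insert v \<tau>) w = - incidence \<tau> w"
  using incidence_remove_less[of "insert v \<tau>" v w] assms by simp

lemma incidence_swap:
  assumes "finite \<tau>" "v \<in> \<tau>" "w \<in> \<tau>" "v \<noteq> w"
  shows "incidence \<tau> w * incidence (\<tau> - {w}) v = - (incidence \<tau> v * incidence (\<tau> - {v}) w)"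
proof (cases "v < w")
  case True
  then show ?thesis using incidence_remove_less[OF assms(1,2) True] incidence_remove_greater[of v w \<tau>]
    by simp
next
  case False
  then have "w < v" using assms(4) by auto
  then show ?thesis using incidence_remove_less[OF assms(1,3) \<open>w < v\<close>] incidence_remove_greater[of w v \<tau>]
    by simp
qed

lemma simplex_boundary_facet:
  assumes "finite \<rho>" and "v \<in> \<rho>"
  shows "simplex_boundary \<rho> (\<rho> - {v}) = incidence \<rho> v"
proof -
  have "simplex_boundary \<rho> (\<rho> - {v}) = (\<Sum>w\<in>\<rho>. if w = v then incidence \<rho> w else 0)"
    unfolding simplex_boundary_def using assms by (intro sum.cong) auto
  also have "\<dots> = incidence \<rho> v" using assms by simp
  finally show ?thesis .
qed

lemma simplex_boundary_eq_0: "(\<And>v. v \<in> \<rho> \<Longrightarrow> \<sigma> \<noteq> \<rho> - {v}) \<Longrightarrow> simplex_boundary \<rho> \<sigma> = 0"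
  unfolding simplex_boundary_def by (intro sum.neutral) auto

lemma simplex_boundary_nonzero:
  assumes "finite \<rho>" "\<sigma> \<subseteq> \<rho>" "card \<rho> = Suc (card \<sigma>)"
  shows "simplex_boundary \<rho> \<sigma> \<noteq> 0"
proof -
  have "\<sigma> \<noteq> \<rho>" using assms(3) by auto
  then obtain v where v: "v \<in> \<rho>" "v \<notin> \<sigma>" using assms(2) by blast
  have "\<sigma> = \<rho> - {v}" using assms v by (intro card_subset_eq) auto
  then show ?thesis using simplex_boundary_facet[OF assms(1) v(1)] incidence_nonzero by simp
qed

lemma sum_antisymmetric_eq_0:
  fixes f :: "'a \<times> 'a \<Rightarrow> real"
  assumes "finite A"
    and antisym: "\<And>v w. v \<in> A \<Longrightarrow> w \<in> A \<Longrightarrow> v \<noteq> w \<Longrightarrow> f (w, v) = - f (v, w)"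
  shows "(\<Sum>p\<in>{(v, w). v \<in> A \<and> w \<in> A \<and> v \<noteq> w}. f p) = 0"
proof -
  define P where "P = {(v, w). v \<in> A \<and> w \<in> A \<and> v \<noteq> w}"
  have "prod.swap ` P = P" unfolding P_def by auto
  then have "sum f P = sum f (prod.swap ` P)" by simp
  also have "\<dots> = sum (f \<circ> prod.swap) P" by (rule sum.reindex[OF inj_swap])
  also have "\<dots> = sum (\<lambda>p. - f p) P"
  proof (rule sum.cong[OF refl])
    fix p assume "p \<in> P"
    then obtain v w where "p = (v, w)" "v \<in> A" "w \<in> A" "v \<noteq> w" unfolding P_def by blast
    then show "(f \<circ> prod.swap) p = - f p" using antisym[of v w] by simp
  qed
  finally have "sum f P = - sum f P" by (simp add: sum_negf)
  then show ?thesis unfolding P_def by simp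
qed

lemma simplex_boundary_cone_apply:
  assumes "finite \<tau>" and m: "\<forall>u\<in>\<tau>. m < u" and "v \<in> \<tau>"
  shows "simplex_boundary (insert m (\<tau> - {v})) \<sigma> = (if \<sigma> = \<tau> - {v} then 1 else 0)
      + (\<Sum>w\<in>\<tau> - {v}. if \<sigma> = insert m (\<tau> - {v} - {w}) then - incidence (\<tau> - {v}) w else 0)"
proof -
  let ?\<rho> = "insert m (\<tau> - {v})"
  have m_\<tau>: "m \<notin> \<tau>" using m by blast
  have "simplex_boundary ?\<rho> \<sigma> = (if \<sigma> = ?\<rho> - {m} then incidence ?\<rho> m else 0)
      + (\<Sum>w\<in>\<tau> - {v}. if \<sigma> = ?\<rho> - {w} then incidence ?\<rho> w else 0)"
    unfolding simplex_boundary_def using assms m_\<tau> by (simp add: sum.insert)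
  also have "?\<rho> - {m} = \<tau> - {v}" using m_\<tau> by blast
  also have "incidence ?\<rho> m = 1" using m by (intro incidence_least) force
  also have "(\<Sum>w\<in>\<tau> - {v}. if \<sigma> = ?\<rho> - {w} then incidence ?\<rho> w else 0)
      = (\<Sum>w\<in>\<tau> - {v}. if \<sigma> = insert m (\<tau> - {v} - {w}) then - incidence (\<tau> - {v}) w else 0)"
  proof (intro sum.cong refl)
    fix w assume w: "w \<in> \<tau> - {v}"
    then have "?\<rho> - {w} = insert m (\<tau> - {v} - {w})" using m_\<tau> by blast
    moreover have "incidence ?\<rho> w = - incidence (\<tau> - {v}) w"
      using w m m_\<tau> assms(1) by (intro incidence_insert_less) auto
    ultimately show "(if \<sigma> = ?\<rho> - {w} then incidence ?\<rho> w else 0)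
        = (if \<sigma> = insert m (\<tau> - {v} - {w}) then - incidence (\<tau> - {v}) w else 0)" by simp
  qed
  finally show ?thesis .
qed

text \<open>This is \<open>\<partial>\<partial>(m * \<tau>) = 0\<close> for the cone \<open>m * \<tau>\<close>, whose boundary is \<open>\<tau> - m * \<partial>\<tau>\<close>;
  the double sum cancels in pairs.\<close>

lemma simplex_boundary_eq_sum_cone:
  assumes fin: "finite \<tau>" and m: "\<forall>u\<in>\<tau>. m < u"
  shows "simplex_boundary \<tau> \<sigma> = (\<Sum>v\<in>\<tau>. incidence \<tau> v * simplex_boundary (insert m (\<tau> - {v})) \<sigma>)"
proof -
  define F where "F = (\<lambda>(v, w). if \<sigma> = insert m (\<tau> - {v} - {w})
      then - (incidence \<tau> v * incidence (\<tau> - {v}) w) else 0)"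
  have "(\<Sum>v\<in>\<tau>. incidence \<tau> v * simplex_boundary (insert m (\<tau> - {v})) \<sigma>)
     = (\<Sum>v\<in>\<tau>. (if \<sigma> = \<tau> - {v} then incidence \<tau> v else 0) + (\<Sum>w\<in>\<tau> - {v}. F (v, w)))"
  proof (rule sum.cong[OF refl])
    fix v assume "v \<in> \<tau>"
    show "incidence \<tau> v * simplex_boundary (insert m (\<tau> - {v})) \<sigma>
        = (if \<sigma> = \<tau> - {v} then incidence \<tau> v else 0) + (\<Sum>w\<in>\<tau> - {v}. F (v, w))"
      unfolding F_def simplex_boundary_cone_apply[OF fin m \<open>v \<in> \<tau>\<close>]
      by (simp add: distrib_left sum_distrib_left if_distrib cong: if_cong)
  qed
  also have "\<dots> = simplex_boundary \<tau> \<sigma> + (\<Sum>p\<in>Sigma \<tau> (\<lambda>v. \<tau> - {v}). F p)"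
    unfolding simplex_boundary_def using fin by (simp add: sum.distrib sum.Sigma)
  also have "Sigma \<tau> (\<lambda>v. \<tau> - {v}) = {(v, w). v \<in> \<tau> \<and> w \<in> \<tau> \<and> v \<noteq> w}" by auto
  also have "(\<Sum>p\<in>{(v, w). v \<in> \<tau> \<and> w \<in> \<tau> \<and> v \<noteq> w}. F p) = 0"
  proof (rule sum_antisymmetric_eq_0[OF fin])
    fix v w assume vw: "v \<in> \<tau>" "w \<in> \<tau>" "v \<noteq> w"
    have "\<tau> - {w} - {v} = \<tau> - {v} - {w}" by blast
    then show "F (w, v) = - F (v, w)" unfolding F_def using incidence_swap[OF fin vw] by simp
  qed
  finally show ?thesis by simp
qed

section \<open>Simplicial complexes, chains and boundaries\<close>

lemma face_subset_vertices: "F \<in> K \<Longrightarrow> F \<subseteq> vertices K"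
  unfolding vertices_def by blast

lemma simplicial_complex_finite_vertices: "simplicial_complex K \<Longrightarrow> finite (vertices K)"
  unfolding simplicial_complex_def vertices_def by blast

lemma simplicial_complex_finite_face: "simplicial_complex K \<Longrightarrow> F \<in> K \<Longrightarrow> finite F"
  by (rule finite_subset[OF face_subset_vertices simplicial_complex_finite_vertices])

lemma simplicial_complex_finite:
  assumes "simplicial_complex K"
  shows "finite K"
proof (rule finite_subset)
  show "K \<subseteq> Pow (vertices K)" using face_subset_vertices by blast
qed (simp add: simplicial_complex_finite_vertices[OF assms])

lemma simplicial_complex_subset_closed: "simplicial_complex K \<Longrightarrow> F \<in> K \<Longrightarrow> G \<subseteq> F \<Longrightarrow> G \<in> K"
  unfolding simplicial_complex_def by blast

lemma finite_faces: "simplicial_complex K \<Longrightarrow> finite (faces K i)"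
  unfolding faces_def by (auto intro: finite_subset[OF _ simplicial_complex_finite])

lemma faces_pred_iff: "0 < r \<Longrightarrow> F \<in> faces K (r - 1) \<longleftrightarrow> F \<in> K \<and> card F = r"
  unfolding faces_def by auto

lemma exists_facet_superset:
  assumes "simplicial_complex K" and "F \<in> K"
  shows "\<exists>G\<in>facets K. F \<subseteq> G"
proof -
  obtain G where "G \<in> K" "F \<subseteq> G" "\<forall>H\<in>K. G \<subseteq> H \<longrightarrow> G = H"
    using finite_has_maximal2[OF simplicial_complex_finite[OF assms(1)] assms(2)] by blast
  then show ?thesis unfolding facets_def by auto
qed

lemma linear_boundary: "real_fun_linear (boundary K i)"
proof -
  have "boundary K i (x + y) = boundary K i x + boundary K i y" for x y
    unfolding boundary_def by (rule ext) (auto simp: sum.distrib[symmetric] algebra_simps intro!: sum.cong)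
  moreover have "boundary K i (\<lambda>z. a * x z) = (\<lambda>z. a * boundary K i x z)" for a x
    unfolding boundary_def by (rule ext) (auto simp: sum_distrib_left algebra_simps intro!: sum.cong)
  ultimately show ?thesis unfolding Vector_Spaces.linear_iff using real_fun_vector_space by blast
qed

lemma chains_subspace: "real_fun.subspace (chains K i)"
  unfolding real_fun.subspace_def chains_def by auto (metis add.right_neutral)

lemma cycles_subspace: "real_fun.subspace (cycles K i)"
proof -
  interpret bd: Vector_Spaces.linear "\<lambda>(a::real) (g::'a set \<Rightarrow> real) x. a * g x"
      "\<lambda>(a::real) (g::'a set \<Rightarrow> real) x. a * g x" "boundary K i"
    by (rule linear_boundary)
  have "cycles K i = chains K i \<inter> {c. boundary K i c = 0}" unfolding cycles_def by auto
  then show ?thesis using real_fun.subspace_inter[OF chains_subspace bd.subspace_kernel] by simp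
qed

lemma unit_chain_in_chains: "\<tau> \<in> faces K i \<Longrightarrow> unit_chain \<tau> \<in> chains K i"
  unfolding chains_def unit_chain_def by auto

lemma chains_eq_span_unit_chains:
  assumes "simplicial_complex K"
  shows "chains K i = real_fun.span (unit_chain ` faces K i)"
proof (rule real_fun.span_subspace[symmetric])
  show "chains K i \<subseteq> real_fun.span (unit_chain ` faces K i)"
    using in_span_unit_chains[OF finite_faces[OF assms]] unfolding chains_def by blast
qed (use unit_chain_in_chains chains_subspace in blast)+

lemma dim_chains:
  assumes "simplicial_complex K"
  shows "real_fun.dim (chains K i) = card (faces K i)"
proof -
  note biorth = biorthogonal_independent[where p = "\<lambda>y. y", OF finite_faces[OF assms] unit_chain_apply]
    biorthogonal_card_image[where p = "\<lambda>y. y", OF finite_faces[OF assms] unit_chain_apply]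
  show ?thesis
    unfolding chains_eq_span_unit_chains[OF assms] real_fun.dim_span_eq_card_independent[OF biorth(1)]
    by (rule biorth(2))
qed

lemma boundary_unit_chain:
  assumes K: "simplicial_complex K" and r: "0 < r" and \<tau>: "\<tau> \<in> faces K r"
  shows "boundary K r (unit_chain \<tau>) = simplex_boundary \<tau>"
proof
  fix \<sigma>
  have \<tau>_K: "\<tau> \<in> K" and card_\<tau>: "card \<tau> = Suc r" using \<tau> unfolding faces_def by auto
  have fin: "finite \<tau>" using simplicial_complex_finite_face[OF K \<tau>_K] .
  show "boundary K r (unit_chain \<tau>) \<sigma> = simplex_boundary \<tau> \<sigma>"
  proof (cases "\<sigma> \<in> faces K (r - 1)")
    case True
    let ?P = "\<lambda>v. \<sigma> = \<tau> - {v}"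
    have "boundary K r (unit_chain \<tau>) \<sigma> = (\<Sum>v\<in>vertices K - \<sigma>. if insert v \<sigma> \<in> K
        then (-1) ^ card {u\<in>\<sigma>. u < v} * unit_chain \<tau> (insert v \<sigma>) else 0)"
      unfolding boundary_def using True r by simp
    also have "\<dots> = (\<Sum>v\<in>vertices K - \<sigma>. if insert v \<sigma> = \<tau> then incidence \<tau> v else 0)"
    proof (intro sum.cong refl)
      fix v assume "v \<in> vertices K - \<sigma>"
      then have "{u\<in>\<tau>. u < v} = {u\<in>\<sigma>. u < v}" if "insert v \<sigma> = \<tau>" using that by auto
      then show "(if insert v \<sigma> \<in> K then (-1) ^ card {u\<in>\<sigma>. u < v} * unit_chain \<tau> (insert v \<sigma>) else 0)
          = (if insert v \<sigma> = \<tau> then incidence \<tau> v else 0)"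
        using \<tau>_K unfolding unit_chain_def incidence_def by auto
    qed
    also have "\<dots> = sum (incidence \<tau>) {v \<in> vertices K - \<sigma>. insert v \<sigma> = \<tau>}"
      by (rule sum.inter_filter[symmetric]) (simp add: simplicial_complex_finite_vertices[OF K])
    also have "{v \<in> vertices K - \<sigma>. insert v \<sigma> = \<tau>} = {v \<in> \<tau>. ?P v}"
      using face_subset_vertices[OF \<tau>_K] by auto
    also have "sum (incidence \<tau>) \<dots> = simplex_boundary \<tau> \<sigma>"
      unfolding simplex_boundary_def by (rule sum.inter_filter[OF fin])
    finally show ?thesis .
  next
    case False
    have "\<tau> - {v} \<in> faces K (r - 1)" if "v \<in> \<tau>" for v
      unfolding faces_pred_iff[OF r]
      using that card_\<tau> fin simplicial_complex_subset_closed[OF K \<tau>_K, of "\<tau> - {v}"] by auto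
    then have "simplex_boundary \<tau> \<sigma> = 0" using False by (intro simplex_boundary_eq_0) auto
    then show ?thesis unfolding boundary_def using False by simp
  qed
qed

lemma boundaries_subset_span_simplex_boundaries:
  assumes K: "simplicial_complex K" and r: "0 < r"
  shows "boundary K r ` chains K r \<subseteq> real_fun.span (simplex_boundary ` faces K r)"
proof -
  interpret bd: Vector_Spaces.linear "\<lambda>(a::real) (g::'a set \<Rightarrow> real) x. a * g x"
      "\<lambda>(a::real) (g::'a set \<Rightarrow> real) x. a * g x" "boundary K r"
    by (rule linear_boundary)
  have "boundary K r ` unit_chain ` faces K r = simplex_boundary ` faces K r"
    using boundary_unit_chain[OF K r] by (simp add: image_image cong: image_cong)
  then show ?thesis
    unfolding chains_eq_span_unit_chains[OF K] using bd.span_image[of "unit_chain ` faces K r"] by simp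
qed

section \<open>Simplices through the least vertex\<close>

lemma Min_less_if_not_mem:
  assumes "finite V" and "\<tau> \<subseteq> V" and "Min V \<notin> \<tau>"
  shows "\<forall>u\<in>\<tau>. Min V < u"
  using Min_le[OF assms(1)] assms(2,3) by (blast intro: le_neq_trans)

definition cone_simplices :: "'a::linorder set \<Rightarrow> nat \<Rightarrow> 'a set set" where
  "cone_simplices V r = {\<rho>. \<rho> \<subseteq> V \<and> card \<rho> = Suc r \<and> Min V \<in> \<rho>}"

lemma finite_cone_simplices: "finite V \<Longrightarrow> finite (cone_simplices V r)"
  unfolding cone_simplices_def by (rule finite_subset[of _ "Pow V"]) auto

lemma card_cone_simplices:
  assumes "finite V" and "V \<noteq> {}"
  shows "card (cone_simplices V r) = (card V - 1) choose r"
proof -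
  let ?m = "Min V"
  have m: "?m \<in> V" using assms by simp
  have "cone_simplices V r = insert ?m ` {\<sigma>. \<sigma> \<subseteq> V - {?m} \<and> card \<sigma> = r}"
  proof (intro set_eqI iffI)
    fix \<rho> assume "\<rho> \<in> cone_simplices V r"
    then have \<rho>: "\<rho> \<subseteq> V" "card \<rho> = Suc r" "?m \<in> \<rho>" unfolding cone_simplices_def by auto
    then have "\<rho> - {?m} \<subseteq> V - {?m} \<and> card (\<rho> - {?m}) = r" by auto
    moreover have "\<rho> = insert ?m (\<rho> - {?m})" using \<rho>(3) by blast
    ultimately show "\<rho> \<in> insert ?m ` {\<sigma>. \<sigma> \<subseteq> V - {?m} \<and> card \<sigma> = r}" by blast
  next
    fix \<rho> assume "\<rho> \<in> insert ?m ` {\<sigma>. \<sigma> \<subseteq> V - {?m} \<and> card \<sigma> = r}"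
    then obtain \<sigma> where "\<rho> = insert ?m \<sigma>" "\<sigma> \<subseteq> V - {?m}" "card \<sigma> = r" by blast
    moreover have "finite \<sigma>" using \<open>\<sigma> \<subseteq> V - {?m}\<close> assms(1) finite_subset by blast
    moreover have "?m \<notin> \<sigma>" using \<open>\<sigma> \<subseteq> V - {?m}\<close> by blast
    ultimately show "\<rho> \<in> cone_simplices V r" unfolding cone_simplices_def using m by auto
  qed
  also have "card \<dots> = card {\<sigma>. \<sigma> \<subseteq> V - {?m} \<and> card \<sigma> = r}"
    by (rule card_image) (auto simp: inj_on_def)
  also have "\<dots> = (card V - 1) choose r" using assms m by (simp add: n_subsets)
  finally show ?thesis .
qed

lemma exists_cone_simplex_superset:
  assumes "finite V" and "S \<subseteq> V" and "card S \<le> r" and "Suc r \<le> card V"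
  obtains \<rho> where "\<rho> \<in> cone_simplices V r" and "S \<subseteq> \<rho>"
proof -
  let ?S = "insert (Min V) S"
  have "V \<noteq> {}" using assms(4) by auto
  then have S_V: "?S \<subseteq> V" using assms(1,2) by simp
  have fin_S: "finite ?S" using finite_subset[OF S_V assms(1)] .
  have card_S: "card ?S \<le> Suc r" using assms(3) card_insert_le_m1 card_insert_if fin_S by fastforce
  have "Suc r - card ?S \<le> card (V - ?S)" using assms(4) card_Diff_subset[OF fin_S S_V] card_S by linarith
  then obtain T where T: "T \<subseteq> V - ?S" "card T = Suc r - card ?S"
    by (meson obtain_subset_with_card_n)
  have "finite T" using T(1) assms(1) finite_subset by blast
  then have "card (?S \<union> T) = Suc r"
    using T card_S card_Un_disjoint[OF fin_S] by fastforce
  then have "?S \<union> T \<in> cone_simplices V r" unfolding cone_simplices_def using S_V T(1) by blast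
  then show ?thesis using that by blast
qed

lemma cone_simplices_biorthogonal:
  assumes "finite V" and x: "x \<in> cone_simplices V r" and y: "y \<in> cone_simplices V r"
  shows "simplex_boundary x (y - {Min V}) = (if x = y then 1 else 0)"
proof (cases "x = y")
  case True
  have "finite x" "Min V \<in> x" "x \<subseteq> V" using x assms(1) finite_subset unfolding cone_simplices_def by auto
  then have "simplex_boundary x (x - {Min V}) = 1"
    using simplex_boundary_facet incidence_least assms(1) by (metis Min_le subsetD)
  then show ?thesis using True by simp
next
  case False
  have "Min V \<in> x" "Min V \<in> y" using x y unfolding cone_simplices_def by auto
  then have "y - {Min V} \<noteq> x - {v}" if "v \<in> x" for v
    using False that by (cases "v = Min V") auto
  then show ?thesis using False by (simp add: simplex_boundary_eq_0)
qed

lemma card_cone_boundaries: "finite V \<Longrightarrow> card (simplex_boundary ` cone_simplices V r) = card (cone_simplices V r)"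
  by (rule biorthogonal_card_image[where p = "\<lambda>y. y - {Min V}"])
    (simp_all add: cone_simplices_biorthogonal finite_cone_simplices)

lemma span_cone_boundaries_eq_0:
  assumes "finite V" and "u \<in> real_fun.span (simplex_boundary ` cone_simplices V r)"
    and "\<And>x. Min V \<notin> x \<Longrightarrow> u x = 0"
  shows "u = 0"
  by (rule biorthogonal_span_eq_0[where X = "cone_simplices V r" and h = simplex_boundary
        and p = "\<lambda>y. y - {Min V}"])
    (simp_all add: cone_simplices_biorthogonal finite_cone_simplices assms)

lemma simplex_boundary_in_span_cone:
  assumes V: "finite V" and \<tau>: "\<tau> \<subseteq> V" "card \<tau> = Suc r"
  shows "simplex_boundary \<tau> \<in> real_fun.span (simplex_boundary ` cone_simplices V r)"
proof (cases "Min V \<in> \<tau>")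
  case True
  then have "\<tau> \<in> cone_simplices V r" using \<tau> unfolding cone_simplices_def by auto
  then show ?thesis by (intro real_fun.span_base imageI)
next
  case False
  have fin: "finite \<tau>" using \<tau>(1) V finite_subset by blast
  have "V \<noteq> {}" using \<tau> by auto
  then have m: "Min V \<in> V" "\<forall>u\<in>\<tau>. Min V < u" using V Min_less_if_not_mem[OF V \<tau>(1) False] by auto
  have "insert (Min V) (\<tau> - {v}) \<in> cone_simplices V r" if "v \<in> \<tau>" for v
    unfolding cone_simplices_def using \<tau> m(1) that fin False by (auto simp: card_insert_if)
  then have "(\<lambda>\<sigma>. incidence \<tau> v * simplex_boundary (insert (Min V) (\<tau> - {v})) \<sigma>)
      \<in> real_fun.span (simplex_boundary ` cone_simplices V r)" if "v \<in> \<tau>" for v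
    using that by (intro real_fun.span_scale real_fun.span_base imageI)
  then have "(\<Sum>v\<in>\<tau>. (\<lambda>\<sigma>. incidence \<tau> v * simplex_boundary (insert (Min V) (\<tau> - {v})) \<sigma>))
      \<in> real_fun.span (simplex_boundary ` cone_simplices V r)"
    by (rule real_fun.span_sum)
  moreover have "simplex_boundary \<tau>
      = (\<Sum>v\<in>\<tau>. (\<lambda>\<sigma>. incidence \<tau> v * simplex_boundary (insert (Min V) (\<tau> - {v})) \<sigma>))"
    by (rule ext) (simp add: sum_apply simplex_boundary_eq_sum_cone[OF fin m(2)])
  ultimately show ?thesis by simp
qed

lemma boundaries_subset_span_cone:
  assumes K: "simplicial_complex K" and r: "0 < r"
  shows "boundary K r ` chains K r \<subseteq> real_fun.span (simplex_boundary ` cone_simplices (vertices K) r)"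
proof -
  have "simplex_boundary ` faces K r \<subseteq> real_fun.span (simplex_boundary ` cone_simplices (vertices K) r)"
    using simplex_boundary_in_span_cone[OF simplicial_complex_finite_vertices[OF K] face_subset_vertices]
    unfolding faces_def by auto
  then show ?thesis
    using boundaries_subset_span_simplex_boundaries[OF K r] real_fun.span_minimal[OF _ real_fun.subspace_span]
    by blast
qed

section \<open>Upper bounds for the number of facets and the Betti number\<close>

lemma pure_card_le:
  assumes K: "simplicial_complex K" and pure: "pure_dim K r" and F: "F \<in> K"
  shows "card F \<le> Suc r"
proof -
  obtain G where G: "G \<in> facets K" "F \<subseteq> G" using exists_facet_superset[OF K F] by blast
  then have "G \<in> K" "card G = Suc r" using pure unfolding facets_def pure_dim_def by auto
  then show ?thesis using card_mono[OF simplicial_complex_finite_face[OF K] G(2)] by simp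
qed

lemma facets_eq_faces_if_pure:
  assumes K: "simplicial_complex K" and pure: "pure_dim K r"
  shows "facets K = faces K r"
proof
  show "facets K \<subseteq> faces K r" using pure unfolding pure_dim_def facets_def faces_def by auto
  show "faces K r \<subseteq> facets K"
  proof
    fix F assume "F \<in> faces K r"
    then have F: "F \<in> K" "card F = Suc r" unfolding faces_def by auto
    have "G = F" if "G \<in> K" "F \<subseteq> G" for G
      using card_seteq[OF simplicial_complex_finite_face[OF K that(1)] that(2)]
        pure_card_le[OF K pure that(1)] F(2) by simp
    then show "F \<in> facets K" using F(1) unfolding facets_def by blast
  qed
qed

lemma betti_eq_dim_cycles:
  assumes "\<And>F. F \<in> K \<Longrightarrow> card F \<le> Suc r"
  shows "betti K r = real_fun.dim (cycles K r)"
proof -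
  interpret bd: Vector_Spaces.linear "\<lambda>(a::real) (g::'a set \<Rightarrow> real) x. a * g x"
      "\<lambda>(a::real) (g::'a set \<Rightarrow> real) x. a * g x" "boundary K (Suc r)"
    by (rule linear_boundary)
  have "faces K (Suc r) = {}" using assms unfolding faces_def by fastforce
  then have "chains K (Suc r) = {0}" unfolding chains_def by (auto simp: fun_eq_iff)
  then have "bdries K r = {0}" unfolding bdries_def using bd.zero by simp
  moreover have "real_fun.dim {0 :: 'a set \<Rightarrow> real} = 0"
    using real_fun.dim_le_card[of "{0}" "{}"] by simp
  ultimately show ?thesis unfolding betti_def rdim_def by simp
qed

lemma card_facets_le_betti_plus_dim_boundaries:
  assumes K: "simplicial_complex K" and pure: "pure_dim K r" and r: "0 < r"
  shows "card (facets K) \<le> betti K r + real_fun.dim (boundary K r ` chains K r)"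
proof -
  have "card (facets K) = real_fun.dim (chains K r)"
    using facets_eq_faces_if_pure[OF K pure] dim_chains[OF K] by simp
  also have "\<dots> \<le> real_fun.dim (chains K r \<inter> {c. boundary K r c = 0})
      + real_fun.dim (boundary K r ` chains K r)"
    using chains_eq_span_unit_chains[OF K] finite_faces[OF K]
    by (intro dim_le_dim_kernel_plus_dim_image[OF linear_boundary chains_subspace,
          of "unit_chain ` faces K r"]) auto
  also have "chains K r \<inter> {c. boundary K r c = 0} = cycles K r" unfolding cycles_def by auto
  also have "real_fun.dim (cycles K r) = betti K r"
    using betti_eq_dim_cycles pure_card_le[OF K pure] by metis
  finally show ?thesis .
qed

definition apex_free_simplices :: "'a::linorder set \<Rightarrow> nat \<Rightarrow> 'a set set" where
  "apex_free_simplices V r = {\<tau>. \<tau> \<subseteq> V - {Min V} \<and> card \<tau> = Suc r}"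

lemma finite_apex_free_simplices: "finite V \<Longrightarrow> finite (apex_free_simplices V r)"
  unfolding apex_free_simplices_def by (rule finite_subset[of _ "Pow V"]) auto

lemma card_apex_free_simplices:
  assumes "finite V" and "V \<noteq> {}"
  shows "card (apex_free_simplices V r) = (card V - 1) choose Suc r"
  using assms unfolding apex_free_simplices_def by (simp add: n_subsets)

text \<open>The boundary of \<open>z\<close> at \<open>\<tau> - {m}\<close> sees, among the faces through \<open>m\<close>, only \<open>\<tau>\<close>.\<close>

lemma cycle_eq_0_if_zero_off_apex:
  assumes K: "simplicial_complex K" and r: "0 < r" and z: "z \<in> cycles K r"
    and zero: "\<And>x. Min (vertices K) \<notin> x \<Longrightarrow> z x = 0"
  shows "z = 0"
proof (rule ext, rule ccontr)
  fix \<tau> assume nz: "z \<tau> \<noteq> 0 \<tau>"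
  let ?V = "vertices K" and ?m = "Min (vertices K)"
  have "z \<in> chains K r" and z_cycle: "boundary K r z = 0" using z unfolding cycles_def by auto
  then have "\<tau> \<in> faces K r" using nz unfolding chains_def by auto
  then have \<tau>: "\<tau> \<in> K" "card \<tau> = Suc r" unfolding faces_def by auto
  have m: "?m \<in> \<tau>" using zero nz by auto
  have fin_V: "finite ?V" by (rule simplicial_complex_finite_vertices[OF K])
  have \<tau>_V: "\<tau> \<subseteq> ?V" by (rule face_subset_vertices[OF \<tau>(1)])
  define \<sigma> where "\<sigma> = \<tau> - {?m}"
  have \<sigma>: "\<sigma> \<in> faces K (r - 1)" unfolding faces_pred_iff[OF r] \<sigma>_def
    using simplicial_complex_subset_closed[OF K \<tau>(1)] simplicial_complex_finite_face[OF K \<tau>(1)] \<tau>(2) m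
    by auto
  have "?m \<in> ?V - \<sigma>" using m \<tau>_V unfolding \<sigma>_def by auto
  moreover have "insert ?m \<sigma> = \<tau>" unfolding \<sigma>_def using m by auto
  moreover have "(-1) ^ card {u\<in>\<sigma>. u < ?m} = (1::real)"
  proof -
    have "{u\<in>\<sigma>. u < ?m} = {}" using \<tau>_V fin_V Min_le unfolding \<sigma>_def by fastforce
    then show ?thesis by (simp only: card.empty power_0)
  qed
  moreover have "(if insert v \<sigma> \<in> K then (-1) ^ card {u\<in>\<sigma>. u < v} * z (insert v \<sigma>) else 0) = 0"
    if "v \<in> ?V - \<sigma> - {?m}" for v
    using that zero unfolding \<sigma>_def by auto
  ultimately have "boundary K r z \<sigma> = z \<tau>"
    unfolding boundary_def using \<sigma> r fin_V \<tau>(1) by (simp add: sum.remove)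
  then show False using z_cycle nz by simp
qed

lemma dim_cycles_le_card_apex_free:
  assumes K: "simplicial_complex K" and r: "0 < r"
  shows "real_fun.dim (cycles K r) \<le> card (apex_free_simplices (vertices K) r)"
proof -
  let ?A = "apex_free_simplices (vertices K) r"
  define R where "R = (\<lambda>(z::'a set \<Rightarrow> real) x. if x \<in> ?A then z x else 0)"
  have lin: "real_fun_linear R"
    unfolding Vector_Spaces.linear_iff R_def by (auto simp: real_fun_vector_space fun_eq_iff)
  then interpret R: Vector_Spaces.linear "\<lambda>(a::real) (g::'a set \<Rightarrow> real) x. a * g x"
      "\<lambda>(a::real) (g::'a set \<Rightarrow> real) x. a * g x" R .
  have fin_A: "finite ?A" by (rule finite_apex_free_simplices[OF simplicial_complex_finite_vertices[OF K]])
  have "z = 0" if z: "z \<in> cycles K r" and "R z = 0" for z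
  proof (rule cycle_eq_0_if_zero_off_apex[OF K r z])
    fix x assume x: "Min (vertices K) \<notin> x"
    show "z x = 0"
    proof (cases "x \<in> ?A")
      case True
      then show ?thesis using fun_cong[OF \<open>R z = 0\<close>, of x] unfolding R_def by simp
    next
      case False
      have "x \<notin> faces K r"
      proof
        assume "x \<in> faces K r"
        then have "x \<subseteq> vertices K" "card x = Suc r"
          using face_subset_vertices[of x K] unfolding faces_def by auto
        then show False using False x unfolding apex_free_simplices_def by auto
      qed
      then show ?thesis using z unfolding cycles_def chains_def by blast
    qed
  qed
  then have "inj_on R (cycles K r)" using R.inj_on_iff_eq_0[OF cycles_subspace] by blast
  moreover have "R ` cycles K r \<subseteq> real_fun.span (unit_chain ` ?A)"
    unfolding R_def by (auto intro!: in_span_unit_chains[OF fin_A] split: if_splits)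
  ultimately have "real_fun.dim (cycles K r) \<le> card (unit_chain ` ?A)"
    using dim_le_card_if_inj_on[OF lin cycles_subspace] fin_A by blast
  also have "\<dots> \<le> card ?A" by (rule card_image_le[OF fin_A])
  finally show ?thesis .
qed

section \<open>Complexes attaining the bound\<close>

definition down_closure :: "'a set set \<Rightarrow> 'a set set" where
  "down_closure Fs = {\<sigma>. \<exists>\<rho>\<in>Fs. \<sigma> \<subseteq> \<rho>}"

lemma vertices_down_closure: "vertices (down_closure Fs) = \<Union>Fs"
  unfolding vertices_def down_closure_def by blast

lemma simplicial_complex_down_closure:
  assumes "finite Fs" and "Fs \<noteq> {}" and "\<And>\<rho>. \<rho> \<in> Fs \<Longrightarrow> finite \<rho>"
  shows "simplicial_complex (down_closure Fs)"
proof -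
  have "finite (\<Union>(down_closure Fs))" using assms(1,3) vertices_down_closure[of Fs]
    unfolding vertices_def by auto
  moreover have "{} \<in> down_closure Fs" using assms(2) unfolding down_closure_def by blast
  ultimately show ?thesis unfolding simplicial_complex_def down_closure_def by blast
qed

context
  fixes Fs :: "'a set set" and r :: nat
  assumes finite_members: "\<And>\<rho>. \<rho> \<in> Fs \<Longrightarrow> finite \<rho>"
    and card_members: "\<And>\<rho>. \<rho> \<in> Fs \<Longrightarrow> card \<rho> = Suc r"
begin

lemma card_le_if_mem_down_closure:
  assumes "\<sigma> \<in> down_closure Fs"
  shows "card \<sigma> \<le> Suc r"
proof -
  obtain \<rho> where "\<rho> \<in> Fs" "\<sigma> \<subseteq> \<rho>" using assms unfolding down_closure_def by blast
  then show ?thesis using card_mono[OF finite_members] card_members by metis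
qed

lemma eq_member_if_mem_down_closure:
  assumes "\<sigma> \<in> down_closure Fs" and "\<rho> \<in> Fs" and "\<rho> \<subseteq> \<sigma>"
  shows "\<sigma> = \<rho>"
proof -
  have "card \<sigma> \<le> card \<rho>" using card_le_if_mem_down_closure[OF assms(1)] card_members[OF assms(2)] by simp
  moreover obtain \<rho>' where "\<rho>' \<in> Fs" "\<sigma> \<subseteq> \<rho>'" using assms(1) unfolding down_closure_def by blast
  then have "finite \<sigma>" using finite_members finite_subset by blast
  ultimately show ?thesis using card_seteq assms(3) by blast
qed

lemma faces_down_closure: "faces (down_closure Fs) r = Fs"
proof
  show "faces (down_closure Fs) r \<subseteq> Fs"
  proof
    fix \<sigma> assume "\<sigma> \<in> faces (down_closure Fs) r"
    then obtain \<rho> where \<rho>: "\<rho> \<in> Fs" "\<sigma> \<subseteq> \<rho>" and "card \<sigma> = Suc r"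
      unfolding faces_def down_closure_def by auto
    then have "\<sigma> = \<rho>" using card_seteq[OF finite_members[OF \<rho>(1)] \<rho>(2)] card_members[OF \<rho>(1)] by simp
    then show "\<sigma> \<in> Fs" using \<rho>(1) by simp
  qed
  show "Fs \<subseteq> faces (down_closure Fs) r"
    unfolding faces_def down_closure_def using card_members by auto
qed

lemma facets_down_closure: "facets (down_closure Fs) = Fs"
proof
  show "facets (down_closure Fs) \<subseteq> Fs"
  proof
    fix \<sigma> assume \<sigma>: "\<sigma> \<in> facets (down_closure Fs)"
    then obtain \<rho> where "\<rho> \<in> Fs" "\<sigma> \<subseteq> \<rho>" unfolding facets_def down_closure_def by auto
    moreover have "\<rho> \<in> down_closure Fs" using \<open>\<rho> \<in> Fs\<close> unfolding down_closure_def by blast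
    ultimately show "\<sigma> \<in> Fs" using \<sigma> unfolding facets_def by blast
  qed
  show "Fs \<subseteq> facets (down_closure Fs)"
    using eq_member_if_mem_down_closure unfolding facets_def down_closure_def by blast
qed

end

text \<open>The boundary \<open>\<tau> - m * \<partial>\<tau>\<close> of the cone \<open>m * \<tau>\<close>.\<close>

definition coned_cycle :: "'a::linorder \<Rightarrow> 'a set \<Rightarrow> 'a set \<Rightarrow> real" where
  "coned_cycle m \<tau> = unit_chain \<tau> - (\<Sum>v\<in>\<tau>. (\<lambda>x. incidence \<tau> v * unit_chain (insert m (\<tau> - {v})) x))"

lemma coned_cycle_off_apex:
  assumes "m \<notin> x"
  shows "coned_cycle m \<tau> x = unit_chain \<tau> x"
proof -
  have "unit_chain (insert m (\<tau> - {v})) x = 0" for v using assms unfolding unit_chain_def by auto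
  then show ?thesis unfolding coned_cycle_def by (simp add: sum_apply)
qed

lemma coned_cycle_in_cycles:
  assumes K: "simplicial_complex K" and r: "0 < r" and fin: "finite \<tau>" and m: "\<forall>u\<in>\<tau>. m < u"
    and \<tau>: "\<tau> \<in> faces K r" and cone: "\<And>v. v \<in> \<tau> \<Longrightarrow> insert m (\<tau> - {v}) \<in> faces K r"
  shows "coned_cycle m \<tau> \<in> cycles K r"
proof -
  interpret bd: Vector_Spaces.linear "\<lambda>(a::real) (g::'a set \<Rightarrow> real) x. a * g x"
      "\<lambda>(a::real) (g::'a set \<Rightarrow> real) x. a * g x" "boundary K r"
    by (rule linear_boundary)
  have "coned_cycle m \<tau> \<in> chains K r"
    unfolding coned_cycle_def using \<tau> cone
    by (intro real_fun.subspace_diff[OF chains_subspace] real_fun.subspace_sum[OF chains_subspace]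
        real_fun.subspace_scale[OF chains_subspace] unit_chain_in_chains) auto
  moreover have "boundary K r (coned_cycle m \<tau>) = 0"
  proof -
    have "boundary K r (coned_cycle m \<tau>) = simplex_boundary \<tau>
        - (\<Sum>v\<in>\<tau>. (\<lambda>x. incidence \<tau> v * simplex_boundary (insert m (\<tau> - {v})) x))"
      unfolding coned_cycle_def bd.diff bd.sum
      using bd.scale boundary_unit_chain[OF K r] \<tau> cone by (simp cong: sum.cong)
    also have "\<dots> = 0"
      by (rule ext) (simp add: sum_apply simplex_boundary_eq_sum_cone[OF fin m])
    finally show ?thesis .
  qed
  ultimately show ?thesis unfolding cycles_def by blast
qed

lemma apex_free_simplex_above_min:
  assumes "finite V" and "\<tau> \<in> apex_free_simplices V r"
  shows "Min V \<notin> \<tau>" and "\<forall>u\<in>\<tau>. Min V < u"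
proof -
  have \<tau>: "\<tau> \<subseteq> V" "Min V \<notin> \<tau>" using assms(2) unfolding apex_free_simplices_def by auto
  then show "Min V \<notin> \<tau>" "\<forall>u\<in>\<tau>. Min V < u" using Min_less_if_not_mem[OF assms(1)] by auto
qed

lemma cone_over_facet_of_apex_free:
  assumes V: "finite V" and \<tau>: "\<tau> \<in> apex_free_simplices V r" and v: "v \<in> \<tau>"
  shows "insert (Min V) (\<tau> - {v}) \<in> cone_simplices V r"
proof -
  have "\<tau> \<subseteq> V" "card \<tau> = Suc r" using \<tau> unfolding apex_free_simplices_def by auto
  moreover have "finite \<tau>" using finite_subset[OF \<open>\<tau> \<subseteq> V\<close> V] .
  moreover have "Min V \<in> V" using V \<open>\<tau> \<subseteq> V\<close> \<open>card \<tau> = Suc r\<close> by (intro Min_in) auto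
  moreover have "card (insert (Min V) (\<tau> - {v})) = Suc (card (\<tau> - {v}))"
    using apex_free_simplex_above_min(1)[OF V \<tau>] \<open>finite \<tau>\<close> by simp
  ultimately show ?thesis unfolding cone_simplices_def using v by auto
qed

definition extremal_complex :: "'a::linorder set \<Rightarrow> nat \<Rightarrow> 'a set set \<Rightarrow> 'a set set" where
  "extremal_complex V r S = down_closure (cone_simplices V r \<union> S)"

context
  fixes V :: "'a::linorder set" and r :: nat and S :: "'a set set"
  assumes finite_V: "finite V" and r: "0 < r" and card_V: "Suc r \<le> card V"
    and S: "S \<subseteq> apex_free_simplices V r"
begin

lemma extremal_facetD:
  assumes "\<rho> \<in> cone_simplices V r \<union> S"
  shows "\<rho> \<subseteq> V" "finite \<rho>" "card \<rho> = Suc r"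
proof -
  show "\<rho> \<subseteq> V" "card \<rho> = Suc r"
    using assms S unfolding cone_simplices_def apex_free_simplices_def by auto
  then show "finite \<rho>" using finite_subset[of \<rho> V] finite_V by simp
qed

lemma finite_extremal_facets: "finite (cone_simplices V r \<union> S)"
  using finite_cone_simplices[OF finite_V] finite_subset[OF S finite_apex_free_simplices[OF finite_V]]
  by simp

lemma facets_extremal_complex: "facets (extremal_complex V r S) = cone_simplices V r \<union> S"
  unfolding extremal_complex_def using facets_down_closure extremal_facetD(2,3) by blast

lemma faces_extremal_complex: "faces (extremal_complex V r S) r = cone_simplices V r \<union> S"
  unfolding extremal_complex_def using faces_down_closure extremal_facetD(2,3) by blast

lemma vertices_extremal_complex: "vertices (extremal_complex V r S) = V"
proof -
  have "\<exists>\<rho>\<in>cone_simplices V r. u \<in> \<rho>" if u: "u \<in> V" for u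
  proof -
    obtain \<rho> where "\<rho> \<in> cone_simplices V r" "{u} \<subseteq> \<rho>"
      using exists_cone_simplex_superset[OF finite_V, of "{u}" r] u r card_V by auto
    then show ?thesis by blast
  qed
  moreover have "\<Union>(cone_simplices V r \<union> S) \<subseteq> V" using extremal_facetD(1) by blast
  ultimately show ?thesis unfolding extremal_complex_def vertices_down_closure by blast
qed

lemma simplicial_complex_extremal_complex: "simplicial_complex (extremal_complex V r S)"
  unfolding extremal_complex_def
proof (rule simplicial_complex_down_closure)
  show "finite (cone_simplices V r \<union> S)" by (rule finite_extremal_facets)
  obtain \<rho> where "\<rho> \<in> cone_simplices V r"
    using exists_cone_simplex_superset[OF finite_V, of "{}" r] card_V by auto
  then show "cone_simplices V r \<union> S \<noteq> {}" by blast
qed (rule extremal_facetD(2))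

lemma coned_cycles_in_cycles_extremal_complex:
  "coned_cycle (Min V) ` S \<subseteq> cycles (extremal_complex V r S) r"
proof
  fix z assume "z \<in> coned_cycle (Min V) ` S"
  then obtain \<tau> where \<tau>: "\<tau> \<in> S" "z = coned_cycle (Min V) \<tau>" by blast
  then have \<tau>_free: "\<tau> \<in> apex_free_simplices V r" using S by blast
  show "z \<in> cycles (extremal_complex V r S) r" unfolding \<tau>(2)
    by (rule coned_cycle_in_cycles[OF simplicial_complex_extremal_complex r extremal_facetD(2)
          apex_free_simplex_above_min(2)[OF finite_V \<tau>_free]])
      (use \<tau>(1) cone_over_facet_of_apex_free[OF finite_V \<tau>_free] faces_extremal_complex in auto)
qed

lemma cycles_extremal_complex: "cycles (extremal_complex V r S) r = real_fun.span (coned_cycle (Min V) ` S)"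
proof
  let ?K = "extremal_complex V r S" and ?m = "Min V"
  show "real_fun.span (coned_cycle ?m ` S) \<subseteq> cycles ?K r"
    by (rule real_fun.span_minimal[OF coned_cycles_in_cycles_extremal_complex cycles_subspace])
  show "cycles ?K r \<subseteq> real_fun.span (coned_cycle ?m ` S)"
  proof
    fix z assume z: "z \<in> cycles ?K r"
    define s where "s = (\<Sum>\<tau>\<in>S. (\<lambda>x. z \<tau> * coned_cycle ?m \<tau> x))"
    have s_span: "s \<in> real_fun.span (coned_cycle ?m ` S)" unfolding s_def
      by (intro real_fun.span_sum real_fun.span_scale real_fun.span_base imageI)
    have "z - s = 0"
    proof (rule cycle_eq_0_if_zero_off_apex[OF simplicial_complex_extremal_complex r])
      show "z - s \<in> cycles ?K r"
        using real_fun.subspace_diff[OF cycles_subspace z] s_span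
          real_fun.span_minimal[OF coned_cycles_in_cycles_extremal_complex cycles_subspace] by blast
      fix x assume "Min (vertices ?K) \<notin> x"
      then have m_x: "?m \<notin> x" using vertices_extremal_complex by simp
      have "s x = (\<Sum>\<tau>\<in>S. z \<tau> * unit_chain \<tau> x)"
        unfolding s_def sum_apply using coned_cycle_off_apex[OF m_x] by simp
      also have "\<dots> = (if x \<in> S then z x else 0)"
        unfolding unit_chain_def using finite_extremal_facets by (simp add: if_distrib cong: if_cong)
      also have "\<dots> = z x"
        using z m_x faces_extremal_complex unfolding cycles_def chains_def cone_simplices_def by auto
      finally show "(z - s) x = 0" by simp
    qed
    then show "z \<in> real_fun.span (coned_cycle ?m ` S)" using s_span by simp
  qed
qed

lemma betti_extremal_complex: "betti (extremal_complex V r S) r = card S"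
proof -
  have biorth: "coned_cycle (Min V) \<tau> \<tau>' = (if \<tau> = \<tau>' then 1 else 0)"
    if "\<tau> \<in> S" "\<tau>' \<in> S" for \<tau> \<tau>'
  proof -
    have "Min V \<notin> \<tau>'" using apex_free_simplex_above_min(1)[OF finite_V] that(2) S by blast
    then show ?thesis using coned_cycle_off_apex[of "Min V" \<tau>' \<tau>] by (simp add: unit_chain_def)
  qed
  have fin_S: "finite S" using finite_extremal_facets by simp
  have "betti (extremal_complex V r S) r = real_fun.dim (cycles (extremal_complex V r S) r)"
    unfolding extremal_complex_def
    by (rule betti_eq_dim_cycles, rule card_le_if_mem_down_closure) (use extremal_facetD in auto)
  also have "\<dots> = card S"
    unfolding cycles_extremal_complex
    using real_fun.dim_span_eq_card_independent[OF biorthogonal_independent[where p = "\<lambda>y. y", OF fin_S biorth]]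
      biorthogonal_card_image[where p = "\<lambda>y. y", OF fin_S biorth] by simp
  finally show ?thesis .
qed

lemma extremal_complex_in_cplx_class: "extremal_complex V r S \<in> cplx_class (card V) r (card S)"
  unfolding cplx_class_def
proof (intro CollectI conjI)
  obtain \<rho> where "\<rho> \<in> cone_simplices V r"
    using exists_cone_simplex_superset[OF finite_V, of "{}" r] card_V by auto
  then show "\<exists>F\<in>extremal_complex V r S. card F = r + 1"
    unfolding extremal_complex_def down_closure_def using extremal_facetD(3)[of \<rho>] by auto
  show "pure_dim (extremal_complex V r S) r"
    unfolding pure_dim_def facets_extremal_complex using extremal_facetD(3) by auto
qed (simp_all add: simplicial_complex_extremal_complex vertices_extremal_complex betti_extremal_complex)

lemma card_facets_extremal_complex:
  "card (facets (extremal_complex V r S)) = card S + ((card V - 1) choose r)"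
proof -
  have "cone_simplices V r \<inter> S = {}"
    using S unfolding cone_simplices_def apex_free_simplices_def by blast
  moreover have "finite S" "V \<noteq> {}" using finite_extremal_facets card_V by auto
  ultimately show ?thesis
    unfolding facets_extremal_complex
    using card_Un_disjoint[OF finite_cone_simplices[OF finite_V]] card_cone_simplices[OF finite_V] by simp
qed

end

lemma cplx_class_card_vertices:
  assumes "K \<in> cplx_class n r \<beta>"
  shows "Suc r \<le> n"
proof -
  obtain F where F: "F \<in> K" "card F = Suc r" and K: "simplicial_complex K" and n: "card (vertices K) = n"
    using assms unfolding cplx_class_def by auto
  show ?thesis
    using card_mono[OF simplicial_complex_finite_vertices[OF K] face_subset_vertices[OF F(1)]] F(2) n by simp
qed

lemma betti_le_choose:
  assumes K: "K \<in> cplx_class n r \<beta>" and r: "0 < r"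
  shows "\<beta> \<le> (n - 1) choose Suc r"
proof -
  have sc: "simplicial_complex K" and pure: "pure_dim K r" and n: "card (vertices K) = n"
    and \<beta>: "betti K r = \<beta>"
    using K unfolding cplx_class_def by auto
  have "vertices K \<noteq> {}" using cplx_class_card_vertices[OF K] n by auto
  have "\<beta> = real_fun.dim (cycles K r)" using betti_eq_dim_cycles pure_card_le[OF sc pure] \<beta> by metis
  also have "\<dots> \<le> card (apex_free_simplices (vertices K) r)" by (rule dim_cycles_le_card_apex_free[OF sc r])
  also have "\<dots> = (n - 1) choose Suc r"
    using card_apex_free_simplices simplicial_complex_finite_vertices[OF sc] \<open>vertices K \<noteq> {}\<close> n by blast
  finally show ?thesis .
qed

lemma exists_complex_with_many_facets:
  fixes V :: "'a::linorder set"
  assumes V: "finite V" "card V = n" and r: "0 < r" "Suc r \<le> n" and \<beta>: "\<beta> \<le> (n - 1) choose Suc r"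
  shows "\<exists>K::'a set set. K \<in> cplx_class n r \<beta> \<and> card (facets K) = \<beta> + ((n - 1) choose r)"
proof -
  have "V \<noteq> {}" using V r by auto
  then obtain S where S: "S \<subseteq> apex_free_simplices V r" "card S = \<beta>"
    using obtain_subset_with_card_n \<beta> card_apex_free_simplices[OF V(1)] V(2) by metis
  have card_V: "Suc r \<le> card V" using V r by simp
  show ?thesis
    using extremal_complex_in_cplx_class[OF V(1) r(1) card_V S(1)]
      card_facets_extremal_complex[OF V(1) r(1) card_V S(1)] V(2) S(2) by auto
qed

section \<open>Complexes with the maximum number of facets\<close>

lemma cone_boundaries_subset_boundaries_if_max:
  fixes K :: "'a::linorder set set"
  assumes r: "0 < r" and K: "K \<in> cplx_class n r \<beta>"
    and max: "\<forall>K'::'a set set\<in>cplx_class n r \<beta>. card (facets K') \<le> card (facets K)"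
  shows "simplex_boundary ` cone_simplices (vertices K) r \<subseteq> boundary K r ` chains K r"
proof -
  interpret bd: Vector_Spaces.linear "\<lambda>(a::real) (g::'a set \<Rightarrow> real) x. a * g x"
      "\<lambda>(a::real) (g::'a set \<Rightarrow> real) x. a * g x" "boundary K r"
    by (rule linear_boundary)
  have sc: "simplicial_complex K" and pure: "pure_dim K r" and n: "card (vertices K) = n"
    and \<beta>: "betti K r = \<beta>"
    using K unfolding cplx_class_def by auto
  have fin_V: "finite (vertices K)" by (rule simplicial_complex_finite_vertices[OF sc])
  have "Suc r \<le> n" by (rule cplx_class_card_vertices[OF K])
  then obtain K' :: "'a set set" where K': "K' \<in> cplx_class n r \<beta>"
      "card (facets K') = \<beta> + ((n - 1) choose r)"
    using exists_complex_with_many_facets[OF fin_V n r] betti_le_choose[OF K r] by blast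
  have "\<beta> + ((n - 1) choose r) \<le> \<beta> + real_fun.dim (boundary K r ` chains K r)"
    using max K' card_facets_le_betti_plus_dim_boundaries[OF sc pure r] \<beta> by fastforce
  moreover have "vertices K \<noteq> {}" using n \<open>Suc r \<le> n\<close> by auto
  then have "card (simplex_boundary ` cone_simplices (vertices K) r) = (n - 1) choose r"
    using card_cone_boundaries[OF fin_V] card_cone_simplices[OF fin_V] n by simp
  ultimately have "card (simplex_boundary ` cone_simplices (vertices K) r)
      \<le> real_fun.dim (boundary K r ` chains K r)" by simp
  then show ?thesis
    using span_subset_subspace_if_card_le_dim[OF bd.subspace_image[OF chains_subspace]
        boundaries_subset_span_cone[OF sc r]] finite_cone_simplices[OF fin_V] by blast
qed

lemma face_if_cone_boundaries:
  assumes K: "simplicial_complex K" and r: "0 < r" and card_V: "Suc r \<le> card (vertices K)"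
    and cone: "simplex_boundary ` cone_simplices (vertices K) r \<subseteq> boundary K r ` chains K r"
    and S: "S \<subseteq> vertices K" "card S = r"
  shows "S \<in> faces K (r - 1)"
proof -
  have fin_V: "finite (vertices K)" by (rule simplicial_complex_finite_vertices[OF K])
  obtain \<rho> where \<rho>: "\<rho> \<in> cone_simplices (vertices K) r" "S \<subseteq> \<rho>"
    using exists_cone_simplex_superset[OF fin_V S(1)] S(2) card_V by auto
  have "\<rho> \<subseteq> vertices K" "card \<rho> = Suc (card S)"
    using \<rho>(1) S(2) unfolding cone_simplices_def by auto
  then have "finite \<rho>" "card \<rho> = Suc (card S)" using finite_subset[OF _ fin_V] by auto
  then have "simplex_boundary \<rho> S \<noteq> 0" using simplex_boundary_nonzero \<rho>(2) by blast
  moreover obtain c where "simplex_boundary \<rho> = boundary K r c" using cone \<rho>(1) by blast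
  ultimately show ?thesis unfolding boundary_def by (auto split: if_splits)
qed

section \<open>Connectivity\<close>

definition up_reachable :: "'a set set \<Rightarrow> nat \<Rightarrow> 'a set \<Rightarrow> 'a set \<Rightarrow> bool" where
  "up_reachable K i F G \<longleftrightarrow> (\<exists>xs. xs \<noteq> [] \<and> hd xs = F \<and> last xs = G \<and> set xs \<subseteq> faces K i \<and>
        (\<forall>j. Suc j < length xs \<longrightarrow> up_neighbors K i (xs ! j) (xs ! Suc j)))"

lemma path_connected_dim_iff: "path_connected_dim K i \<longleftrightarrow> (\<forall>F\<in>faces K i. \<forall>G\<in>faces K i. up_reachable K i F G)"
  unfolding path_connected_dim_def up_reachable_def ..

lemma up_reachable_refl: "F \<in> faces K i \<Longrightarrow> up_reachable K i F F"
  unfolding up_reachable_def by (intro exI[of _ "[F]"]) auto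

lemma up_reachable_face: "up_reachable K i F G \<Longrightarrow> G \<in> faces K i"
  unfolding up_reachable_def by auto

lemma up_reachable_step:
  assumes "up_reachable K i F G" and "up_neighbors K i G H"
  shows "up_reachable K i F H"
proof -
  obtain xs where xs: "xs \<noteq> []" "hd xs = F" "last xs = G" "set xs \<subseteq> faces K i"
      "\<forall>j. Suc j < length xs \<longrightarrow> up_neighbors K i (xs ! j) (xs ! Suc j)"
    using assms(1) unfolding up_reachable_def by blast
  have "up_neighbors K i ((xs @ [H]) ! j) ((xs @ [H]) ! Suc j)" if "Suc j < length (xs @ [H])" for j
  proof (cases "Suc j < length xs")
    case True
    then show ?thesis using xs(5) by (simp add: nth_append)
  next
    case False
    then have "j = length xs - 1" "Suc j = length xs" using that by auto
    then show ?thesis using xs(1,3) assms(2) by (simp add: nth_append last_conv_nth)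
  qed
  moreover have "H \<in> faces K i" using assms(2) unfolding up_neighbors_def by blast
  ultimately show ?thesis
    unfolding up_reachable_def using xs by (intro exI[of _ "xs @ [H]"]) auto
qed

lemma up_reachable_within_face:
  assumes K: "simplicial_complex K" and R: "up_reachable K i F \<sigma>"
    and \<tau>: "\<tau> \<in> faces K (Suc i)" and "\<sigma> \<subseteq> \<tau>" and "x \<subseteq> \<tau>" and "card x = Suc i"
  shows "up_reachable K i F x"
proof (cases "x = \<sigma>")
  case False
  have \<tau>_K: "\<tau> \<in> K" "card \<tau> = Suc (Suc i)" using \<tau> unfolding faces_def by auto
  have fin: "finite \<tau>" by (rule simplicial_complex_finite_face[OF K \<tau>_K(1)])
  have \<sigma>: "\<sigma> \<in> faces K i" by (rule up_reachable_face[OF R])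
  then have "card \<sigma> = Suc i" unfolding faces_def by simp
  then have "\<not> x \<subseteq> \<sigma>" using False card_seteq[of \<sigma> x] finite_subset[OF \<open>\<sigma> \<subseteq> \<tau>\<close> fin] \<open>card x = Suc i\<close>
    by auto
  then have "card \<sigma> < card (\<sigma> \<union> x)" using fin \<open>\<sigma> \<subseteq> \<tau>\<close> \<open>x \<subseteq> \<tau>\<close>
    by (intro psubset_card_mono) (auto intro: finite_subset)
  then have "\<sigma> \<union> x = \<tau>"
    using card_seteq[OF fin, of "\<sigma> \<union> x"] card_mono[OF fin, of "\<sigma> \<union> x"] \<open>\<sigma> \<subseteq> \<tau>\<close> \<open>x \<subseteq> \<tau>\<close>
      \<open>card \<sigma> = Suc i\<close> \<tau>_K(2) by auto
  moreover have "x \<in> faces K i"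
    using simplicial_complex_subset_closed[OF K \<tau>_K(1) \<open>x \<subseteq> \<tau>\<close>] \<open>card x = Suc i\<close>
    unfolding faces_def by simp
  ultimately have "up_neighbors K i \<sigma> x" using \<sigma> \<tau> False unfolding up_neighbors_def by auto
  then show ?thesis by (rule up_reachable_step[OF R])
qed (use R in simp)

lemma boundary_restrict_up_component:
  fixes F :: "'a::linorder set"
  assumes K: "simplicial_complex K" and r: "0 < r" and c: "c \<in> chains K r"
  defines "c' \<equiv> \<lambda>\<tau>. if \<exists>\<sigma>\<subseteq>\<tau>. up_reachable K (r - 1) F \<sigma> then c \<tau> else 0"
  shows "boundary K r c' x = (if up_reachable K (r - 1) F x then boundary K r c x else 0)"
proof (cases "x \<in> faces K (r - 1)")
  case True
  have "finite x" "card x = r" using True simplicial_complex_finite_face[OF K] faces_pred_iff[OF r] by auto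
  have "c' (insert v x) = (if up_reachable K (r - 1) F x then c (insert v x) else 0)"
    if v: "v \<in> vertices K - x" for v
  proof (cases "up_reachable K (r - 1) F x")
    case False
    have "c (insert v x) = 0" if \<sigma>: "\<sigma> \<subseteq> insert v x" "up_reachable K (r - 1) F \<sigma>" for \<sigma>
    proof (rule ccontr)
      assume "c (insert v x) \<noteq> 0"
      then have "insert v x \<in> faces K (Suc (r - 1))" using c r unfolding chains_def by auto
      then have "up_reachable K (r - 1) F x"
        using up_reachable_within_face[OF K \<sigma>(2) _ \<sigma>(1)] \<open>card x = r\<close> r by auto
      then show False using False by simp
    qed
    then show ?thesis unfolding c'_def using False by auto
  qed (auto simp: c'_def)
  then show ?thesis unfolding boundary_def using True by (auto intro!: sum.cong sum.neutral)
next
  case False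
  then show ?thesis using up_reachable_face unfolding boundary_def by auto
qed

lemma span_cone_boundaries_eq_multiple:
  assumes V: "finite V" and \<rho>: "\<rho> \<in> cone_simplices V r"
    and u: "u \<in> real_fun.span (simplex_boundary ` cone_simplices V r)"
    and zero: "\<And>x. Min V \<notin> x \<Longrightarrow> x \<noteq> \<rho> - {Min V} \<Longrightarrow> u x = 0"
  shows "u = (\<lambda>x. u (\<rho> - {Min V}) * simplex_boundary \<rho> x)"
proof -
  let ?m = "Min V" and ?t = "u (\<rho> - {Min V})"
  have "u - (\<lambda>x. ?t * simplex_boundary \<rho> x) = 0"
  proof (rule span_cone_boundaries_eq_0[OF V])
    show "u - (\<lambda>x. ?t * simplex_boundary \<rho> x) \<in> real_fun.span (simplex_boundary ` cone_simplices V r)"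
      using \<rho> by (intro real_fun.span_diff[OF u] real_fun.span_scale real_fun.span_base imageI)
    fix x assume m_x: "?m \<notin> x"
    show "(u - (\<lambda>x. ?t * simplex_boundary \<rho> x)) x = 0"
    proof (cases "x = \<rho> - {?m}")
      case True
      then show ?thesis using cone_simplices_biorthogonal[OF V \<rho> \<rho>] by simp
    next
      case False
      have "?m \<in> \<rho>" using \<rho> unfolding cone_simplices_def by simp
      then have "simplex_boundary \<rho> x = 0" using False m_x by (intro simplex_boundary_eq_0) auto
      then show ?thesis using zero[OF m_x False] by simp
    qed
  qed
  then show ?thesis by (simp only: right_minus_eq)
qed

lemma up_reachable_in_cone_simplex:
  assumes K: "simplicial_complex K" and r: "0 < r"
    and \<rho>: "\<rho> \<in> cone_simplices (vertices K) r" "simplex_boundary \<rho> \<in> boundary K r ` chains K r"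
    and R: "up_reachable K (r - 1) F \<sigma>" and "\<sigma> \<subseteq> \<rho>" and "\<sigma>' \<subseteq> \<rho>" and "card \<sigma>' = r"
  shows "up_reachable K (r - 1) F \<sigma>'"
proof -
  let ?V = "vertices K" and ?m = "Min (vertices K)" and ?R = "up_reachable K (r - 1) F"
  have fin_V: "finite ?V" by (rule simplicial_complex_finite_vertices[OF K])
  obtain c where c: "c \<in> chains K r" "simplex_boundary \<rho> = boundary K r c" using \<rho>(2) by blast
  define c' where "c' = (\<lambda>\<tau>. if \<exists>\<sigma>\<subseteq>\<tau>. ?R \<sigma> then c \<tau> else 0)"
  define u where "u = boundary K r c'"
  have u: "u x = (if ?R x then simplex_boundary \<rho> x else 0)" for x
    unfolding u_def c'_def using boundary_restrict_up_component[OF K r c(1)] c(2) by simp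
  have "c' \<in> chains K r" using c(1) unfolding chains_def c'_def by auto
  then have "u \<in> real_fun.span (simplex_boundary ` cone_simplices ?V r)"
    unfolding u_def using boundaries_subset_span_cone[OF K r] by blast
  moreover have "u x = 0" if x: "?m \<notin> x" "x \<noteq> \<rho> - {?m}" for x
  proof -
    have "?m \<in> \<rho>" using \<rho>(1) unfolding cone_simplices_def by simp
    then have "simplex_boundary \<rho> x = 0" using x by (intro simplex_boundary_eq_0) auto
    then show ?thesis using u[of x] by simp
  qed
  ultimately have u_eq: "u = (\<lambda>x. u (\<rho> - {?m}) * simplex_boundary \<rho> x)"
    by (rule span_cone_boundaries_eq_multiple[OF fin_V \<rho>(1)])
  have "\<rho> \<subseteq> ?V" "card \<rho> = Suc r" using \<rho>(1) unfolding cone_simplices_def by auto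
  then have nz: "simplex_boundary \<rho> y \<noteq> 0" if "y \<subseteq> \<rho>" "card y = r" for y
    using simplex_boundary_nonzero[OF finite_subset[OF _ fin_V] that(1)] that(2) by simp
  have "card \<sigma> = r" using up_reachable_face[OF R] r unfolding faces_def by simp
  then have "u (\<rho> - {?m}) = 1"
    using fun_cong[OF u_eq, of \<sigma>] u[of \<sigma>] R nz[OF \<open>\<sigma> \<subseteq> \<rho>\<close>] by simp
  then show ?thesis using fun_cong[OF u_eq, of \<sigma>'] u[of \<sigma>'] nz[OF \<open>\<sigma>' \<subseteq> \<rho>\<close> \<open>card \<sigma>' = r\<close>]
    by (auto split: if_splits)
qed

text \<open>An exchange passes through at most two simplices through the least vertex \<open>m\<close>:
  \<open>\<sigma> + y\<close> if it contains \<open>m\<close>, and otherwise \<open>\<sigma> + m\<close> followed by \<open>\<sigma> - x + m + y\<close>.\<close>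

lemma up_reachable_exchange:
  assumes K: "simplicial_complex K" and r: "0 < r"
    and cone: "simplex_boundary ` cone_simplices (vertices K) r \<subseteq> boundary K r ` chains K r"
    and R: "up_reachable K (r - 1) F \<sigma>" and y: "y \<in> vertices K" "y \<notin> \<sigma>" and x: "x \<in> \<sigma>"
  shows "up_reachable K (r - 1) F (insert y (\<sigma> - {x}))"
proof -
  let ?V = "vertices K" and ?m = "Min (vertices K)"
  have move: "up_reachable K (r - 1) F \<sigma>'"
    if "\<rho> \<in> cone_simplices ?V r" "up_reachable K (r - 1) F \<sigma>0" "\<sigma>0 \<subseteq> \<rho>" "\<sigma>' \<subseteq> \<rho>" "card \<sigma>' = r"
    for \<rho> \<sigma>0 \<sigma>'
    using up_reachable_in_cone_simplex[OF K r that(1) _ that(2-5)] cone that(1) by blast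
  have \<sigma>: "\<sigma> \<in> K" "card \<sigma> = r" using up_reachable_face[OF R] faces_pred_iff[OF r] by auto
  have fin: "finite \<sigma>" by (rule simplicial_complex_finite_face[OF K \<sigma>(1)])
  have \<sigma>_V: "\<sigma> \<subseteq> ?V" by (rule face_subset_vertices[OF \<sigma>(1)])
  have m: "?m \<in> ?V" using y simplicial_complex_finite_vertices[OF K] by (intro Min_in) auto
  have card_exchange: "card (insert a (\<sigma> - {x})) = r" if "a \<notin> \<sigma>" for a
    using that x fin \<sigma>(2) r by (simp add: card_insert_if)
  have cone_insert: "insert a \<sigma>' \<in> cone_simplices ?V r"
    if "a \<in> ?V" "a \<notin> \<sigma>'" "\<sigma>' \<subseteq> ?V" "finite \<sigma>'" "card \<sigma>' = r" "?m \<in> insert a \<sigma>'" for a \<sigma>'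
    using that unfolding cone_simplices_def by simp
  show ?thesis
  proof (cases "?m \<in> insert y \<sigma>")
    case True
    show ?thesis
      by (rule move[OF cone_insert[OF y(1,2) \<sigma>_V fin \<sigma>(2) True] R])
        (use card_exchange y(2) in auto)
  next
    case False
    let ?\<sigma>1 = "insert ?m (\<sigma> - {x})"
    have card_\<sigma>1: "card ?\<sigma>1 = r" using False by (intro card_exchange) auto
    have R1: "up_reachable K (r - 1) F ?\<sigma>1"
      using False card_\<sigma>1 by (intro move[OF cone_insert[OF m _ \<sigma>_V fin \<sigma>(2)] R]) auto
    have "insert y ?\<sigma>1 \<in> cone_simplices ?V r"
      using False y \<sigma>_V m fin card_\<sigma>1 by (intro cone_insert) auto
    then show ?thesis
      by (rule move[OF _ R1]) (use card_exchange y(2) in auto)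
  qed
qed

lemma up_reachable_all:
  assumes K: "simplicial_complex K" and r: "0 < r"
    and cone: "simplex_boundary ` cone_simplices (vertices K) r \<subseteq> boundary K r ` chains K r"
    and R: "up_reachable K (r - 1) F \<sigma>" and \<tau>: "\<tau> \<subseteq> vertices K" "card \<tau> = r"
  shows "up_reachable K (r - 1) F \<tau>"
  using R
proof (induction "card (\<tau> - \<sigma>)" arbitrary: \<sigma>)
  case 0
  have \<sigma>: "\<sigma> \<in> K" "card \<sigma> = r" using up_reachable_face[OF "0.prems"] faces_pred_iff[OF r] by auto
  have "finite \<tau>" by (rule finite_subset[OF \<tau>(1) simplicial_complex_finite_vertices[OF K]])
  then have "\<tau> - \<sigma> = {}" using "0.hyps" by simp
  then have "\<tau> = \<sigma>"
    by (intro card_seteq[OF simplicial_complex_finite_face[OF K \<sigma>(1)]]) (auto simp: \<sigma>(2) \<tau>(2))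
  then show ?case using "0.prems" by simp
next
  case (Suc k)
  have \<sigma>: "\<sigma> \<in> K" "card \<sigma> = r" using up_reachable_face[OF Suc.prems] faces_pred_iff[OF r] by auto
  have fin: "finite \<tau>" by (rule finite_subset[OF \<tau>(1) simplicial_complex_finite_vertices[OF K]])
  have "\<tau> - \<sigma> \<noteq> {}" using Suc.hyps(2) by (metis card.empty nat.distinct(1))
  then obtain y where y: "y \<in> \<tau>" "y \<notin> \<sigma>" by blast
  have "\<not> \<sigma> \<subseteq> \<tau>" using y card_seteq[OF fin, of \<sigma>] \<sigma>(2) \<tau>(2) by auto
  then obtain x where x: "x \<in> \<sigma>" "x \<notin> \<tau>" by blast
  have "\<tau> - insert y (\<sigma> - {x}) = (\<tau> - \<sigma>) - {y}" using x(2) by blast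
  then have "card (\<tau> - insert y (\<sigma> - {x})) = k" using Suc.hyps(2) y fin by simp
  then show ?case
    using Suc.hyps(1) up_reachable_exchange[OF K r cone Suc.prems] y x \<tau>(1) by blast
qed

theorem mainTheorem3:
  fixes K :: "'a::linorder set set" and n r \<beta> :: nat
  assumes "1 \<le> r"
    and "K \<in> cplx_class n r \<beta>"
    and "\<forall>K'::'a set set\<in>cplx_class n r \<beta>. card (facets K') \<le> card (facets K)"
  shows "(\<forall>S. S \<subseteq> vertices K \<and> card S = r \<longrightarrow> S \<in> faces K (r - 1))
         \<and> path_connected_dim K (r - 1)"
proof -
  have r: "0 < r" using assms(1) by simp
  have K: "simplicial_complex K" and card_V: "Suc r \<le> card (vertices K)"
    using assms(2) cplx_class_card_vertices[OF assms(2)] unfolding cplx_class_def by auto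
  have cone: "simplex_boundary ` cone_simplices (vertices K) r \<subseteq> boundary K r ` chains K r"
    by (rule cone_boundaries_subset_boundaries_if_max[OF r assms(2,3)])
  have "up_reachable K (r - 1) F G" if F: "F \<in> faces K (r - 1)" and G: "G \<in> faces K (r - 1)" for F G
  proof (rule up_reachable_all[OF K r cone up_reachable_refl[OF F]])
    show "G \<subseteq> vertices K" "card G = r" using G face_subset_vertices[of G K] faces_pred_iff[OF r] by auto
  qed
  then have "path_connected_dim K (r - 1)" unfolding path_connected_dim_iff by blast
  then show ?thesis using face_if_cone_boundaries[OF K r card_V cone] by blast
qed

end
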